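(* Let $\mathcal{W}$ be a finite set and $(X_t)_{t\ge1}$ a time-homogeneous first-order Markov chain on $\mathcal{W}$ with initial distribution $p_{x_1}$ and transition probabilities $q_x(x_{t+1}\mid x_t)$. For any history-dependent release policy $\boldsymbol q_h\in\mathcal{Q}_H$ there exists a policy $\boldsymbol q_s\in\mathcal{Q}_S$ such that, for every $n\ge1$, $$\sum_{t=1}^n I^{\boldsymbol q_h}(X_t,X_{t-1};Y_t\mid Y^{t-1})=\sum_{t=1}^n I^{\boldsymbol q_s}(X_t,X_{t-1};Y_t\mid Y^{t-1}).$$
   Context: Notation: $X^t=(X_1,\dots,X_t)$, $Y^{t-1}=(Y_1,\dots,Y_{t-1})$, $Y^0$ empty; at $t=1$ terms involving $X_0$ are absent. A history-dependent release policy is a sequence $\boldsymbol q=\{q_t(y_t\mid x^t,y^{t-1})\}_{t\ge1}$ of conditional probability distributions on $\mathcal{W}$; $\mathcal{Q}_H$ is the set of all such policies. The released locations $Y_t\in\mathcal W$ and true locations have joint law $$P^{\boldsymbol q}(X^n=x^n,Y^n=y^n)=p_{x_1}(x_1)q_1(y_1\mid x_1)\prod_{t=2}^n q_x(x_t\mid x_{t-1})\,q_t(y_t\mid x^t,y^{t-1}),$$ and $I^{\boldsymbol q}$ denotes mutual information under this law. $\mathcal{Q}_S\subseteq\mathcal{Q}_H$ is the set of policies of the form $q_t(y_t\mid x_t,x_{t-1},y^{t-1})$, depending on the true trajectory only through $(x_t,x_{t-1})$. *)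

theory Defs
  imports Complex_Main
begin

text \<open>The finite location set W is modelled by a finite type 'w.
  Trajectories x^n and releases y^n are lists of length n (index t is position t-1).\<close>

definition is_dist :: "('w::finite \<Rightarrow> real) \<Rightarrow> bool" where
  "is_dist d \<longleftrightarrow> (\<forall>w. 0 \<le> d w) \<and> (\<Sum>w\<in>UNIV. d w) = 1"

text \<open>A release policy: q t xs ys y = q_t(y | x^t = xs, y^(t-1) = ys).\<close>
type_synonym 'w policy = "nat \<Rightarrow> 'w list \<Rightarrow> 'w list \<Rightarrow> 'w \<Rightarrow> real"

definition policy_H :: "'w::finite policy \<Rightarrow> bool" where
  "policy_H q \<longleftrightarrow> (\<forall>t\<ge>1. \<forall>xs ys. length xs = t \<and> length ys = t - 1 \<longrightarrow> is_dist (q t xs ys))"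

text \<open>Membership in Q_S: a history-dependent policy that depends on x^t only through
  (x_t, x_(t-1)) (only x_1 at t = 1).\<close>
definition policy_S :: "'w::finite policy \<Rightarrow> bool" where
  "policy_S q \<longleftrightarrow> policy_H q \<and>
     (\<forall>t\<ge>1. \<forall>xs xs' ys. length xs = t \<and> length xs' = t \<and> length ys = t - 1 \<and>
        drop (t - 2) xs = drop (t - 2) xs' \<longrightarrow> q t xs ys = q t xs' ys)"

text \<open>Joint law P^q(X^n = xs, Y^n = ys), for lists of length n \<ge> 1;
  p1 is the initial distribution, Qx a b = q_x(b | a) the transition kernel.\<close>
definition joint :: "('w \<Rightarrow> real) \<Rightarrow> ('w \<Rightarrow> 'w \<Rightarrow> real) \<Rightarrow> 'w policy \<Rightarrow> nat \<Rightarrow> 'w list \<Rightarrow> 'w list \<Rightarrow> real" where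
  "joint p1 Qx q n xs ys =
     p1 (xs ! 0) * q 1 (take 1 xs) [] (ys ! 0) *
     (\<Prod>t\<in>{2..n}. Qx (xs ! (t - 2)) (xs ! (t - 1)) * q t (take t xs) (take (t - 1) ys) (ys ! (t - 1)))"

definition prob_ev :: "('w::finite \<Rightarrow> real) \<Rightarrow> ('w \<Rightarrow> 'w \<Rightarrow> real) \<Rightarrow> 'w policy \<Rightarrow> nat
     \<Rightarrow> ('w list \<Rightarrow> 'w list \<Rightarrow> bool) \<Rightarrow> real" where
  "prob_ev p1 Qx q n E =
     (\<Sum>xs\<in>{xs. length xs = n}. \<Sum>ys\<in>{ys. length ys = n}. if E xs ys then joint p1 Qx q n xs ys else 0)"

text \<open>I^q(X_t, X_(t-1); Y_t | Y^(t-1)) computed under the law P^q on (X^n, Y^n), 1 \<le> t \<le> n.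
  The pair (X_t, X_(t-1)) is represented by the list drop (t-2) (take t x^n),
  which is [x_1] for t = 1 (X_0 absent) and [x_(t-1), x_t] for t \<ge> 2.
  Standard discrete conditional mutual information (base-2 logarithm, 0 log 0 = 0).\<close>
definition cmi :: "('w::finite \<Rightarrow> real) \<Rightarrow> ('w \<Rightarrow> 'w \<Rightarrow> real) \<Rightarrow> 'w policy \<Rightarrow> nat \<Rightarrow> nat \<Rightarrow> real" where
  "cmi p1 Qx q n t =
     (let P = prob_ev p1 Qx q n;
          A = (\<lambda>xs. drop (t - 2) (take t xs));
          C = (\<lambda>ys. take (t - 1) ys);
          B = (\<lambda>ys. ys ! (t - 1))
      in \<Sum>u\<in>{u. length u = min t 2}. \<Sum>y\<in>UNIV. \<Sum>c\<in>{c. length c = t - 1}.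
           (let pabc = P (\<lambda>xs ys. A xs = u \<and> B ys = y \<and> C ys = c);
                pac = P (\<lambda>xs ys. A xs = u \<and> C ys = c);
                pbc = P (\<lambda>xs ys. B ys = y \<and> C ys = c);
                pc = P (\<lambda>xs ys. C ys = c)
            in if pabc = 0 then 0 else pabc * log 2 ((pabc * pc) / (pac * pbc))))"

end

theory Submission
  imports Defs
begin

(* Let q_s release Y_t according to the conditional law
     P^{q_h}(Y_t = y | X_t = x_t, X_{t-1} = x_{t-1}, Y^{t-1} = y^{t-1}).
   Since X is a Markov chain, the law of (X_{t-1}, X_t, Y^t) under q_h is the law of
   (X_{t-1}, Y^{t-1}) times q_x(x_t | x_{t-1}) q_s(y_t | x_t, x_{t-1}, y^{t-1}), and under q_s
   this holds by construction.  Hence, by induction on t, both policies induce the same law of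
   (X_{t-1}, X_t, Y^t), and each summand I(X_t, X_{t-1}; Y_t | Y^{t-1}) depends on this law only. *)

lemma finite_length_lists [simp]: "finite {xs :: 'w::finite list. length xs = n}"
  using finite_lists_length_eq[of "UNIV :: 'w set" n] by simp

lemma sum_lists_length_Suc:
  "(\<Sum>xs | length xs = Suc n. g xs) = (\<Sum>xs | length xs = n. \<Sum>b\<in>UNIV. g (xs @ [b :: 'w::finite]))"
proof -
  have "bij_betw (\<lambda>(xs, b). xs @ [b]) ({xs. length xs = n} \<times> UNIV) {xs :: 'w list. length xs = Suc n}"
    by (rule bij_betwI'; clarsimp)
      (metis append_butlast_last_id length_butlast length_greater_0_conv diff_Suc_1 zero_less_Suc)
  then show ?thesis
    by (simp add: sum.reindex_bij_betw[symmetric] sum.cartesian_product split_def)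
qed

lemma sum_mult_group:
  fixes g :: "'a \<Rightarrow> 'b::finite" and \<phi> :: "'b \<Rightarrow> 'c::comm_semiring_0"
  assumes "finite S"
  shows "(\<Sum>x\<in>S. \<phi> (g x) * \<psi> x) = (\<Sum>y\<in>UNIV. \<phi> y * (\<Sum>x | x \<in> S \<and> g x = y. \<psi> x))"
proof -
  have "(\<Sum>y\<in>UNIV. \<phi> y * (\<Sum>x | x \<in> S \<and> g x = y. \<psi> x)) =
        (\<Sum>y\<in>UNIV. \<Sum>x | x \<in> S \<and> g x = y. \<phi> (g x) * \<psi> x)"
    by (simp add: sum_distrib_left)
  also have "\<dots> = (\<Sum>x\<in>S. \<phi> (g x) * \<psi> x)"
    using assms by (intro sum.group) auto
  finally show ?thesis ..
qed

lemma joint_snoc: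
  assumes "length xs = n" "length ys = n" "n \<ge> 1"
  shows "joint p1 Qx q (Suc n) (xs @ [b]) (ys @ [y]) =
         joint p1 Qx q n xs ys * Qx (last xs) b * q (Suc n) (xs @ [b]) ys y"
proof -
  have prefix: "(\<Prod>t\<in>{2..n}. Qx ((xs @ [b]) ! (t - 2)) ((xs @ [b]) ! (t - 1)) *
                  q t (take t (xs @ [b])) (take (t - 1) (ys @ [y])) ((ys @ [y]) ! (t - 1))) =
                (\<Prod>t\<in>{2..n}. Qx (xs ! (t - 2)) (xs ! (t - 1)) *
                  q t (take t xs) (take (t - 1) ys) (ys ! (t - 1)))"
    using assms by (intro prod.cong) (auto simp: nth_append)
  have last_factor: "{2..Suc n} = insert (Suc n) {2..n}" "Suc n \<notin> {2..n}"
    using assms by auto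
  have "last xs = xs ! (n - 1)" using assms by (subst last_conv_nth) auto
  then show ?thesis
    using assms
    unfolding joint_def last_factor prod.insert[OF finite_atLeastAtMost last_factor(2)] prefix
    by (simp add: nth_append mult_ac)
qed

lemma drop_last_two:
  assumes "length xs = t" "t \<ge> 1"
  shows "drop (Suc t - 2) (xs @ [b]) = [last xs, b]"
  using assms by (cases xs rule: rev_cases) auto

lemma policy_H_nonneg:
  "policy_H q \<Longrightarrow> t \<ge> 1 \<Longrightarrow> length xs = t \<Longrightarrow> length ys = t - 1 \<Longrightarrow> q t xs ys y \<ge> 0"
  unfolding policy_H_def is_dist_def by blast

lemma policy_H_sum_eq_1:
  "policy_H q \<Longrightarrow> t \<ge> 1 \<Longrightarrow> length xs = t \<Longrightarrow> length ys = t - 1 \<Longrightarrow>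
   (\<Sum>y\<in>UNIV. q t xs ys y) = 1"
  unfolding policy_H_def is_dist_def by blast

lemma joint_nonneg:
  assumes "is_dist p1" "\<forall>a. is_dist (Qx a)" "policy_H q"
    and "length xs = n" "length ys = n" "n \<ge> 1"
  shows "joint p1 Qx q n xs ys \<ge> 0"
proof -
  have "p1 (xs ! 0) \<ge> 0" "\<And>a b. Qx a b \<ge> 0"
    using assms(1,2) unfolding is_dist_def by auto
  moreover have "q 1 (take 1 xs) [] (ys ! 0) \<ge> 0"
    using assms by (intro policy_H_nonneg) auto
  moreover have "\<And>t. t \<in> {2..n} \<Longrightarrow> q t (take t xs) (take (t - 1) ys) (ys ! (t - 1)) \<ge> 0"
    using assms by (intro policy_H_nonneg) auto
  ultimately show ?thesis
    using assms(6) unfolding joint_def by (intro mult_nonneg_nonneg prod_nonneg) auto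
qed

lemma sum_joint_snoc:
  assumes "\<forall>a. is_dist (Qx a)" "policy_H q" "length xs = n" "length ys = n" "n \<ge> 1"
  shows "(\<Sum>b\<in>UNIV. \<Sum>y\<in>UNIV. joint p1 Qx q (Suc n) (xs @ [b]) (ys @ [y])) =
         joint p1 Qx q n xs ys"
proof -
  have "(\<Sum>b\<in>UNIV. \<Sum>y\<in>UNIV. joint p1 Qx q (Suc n) (xs @ [b]) (ys @ [y])) =
        joint p1 Qx q n xs ys * (\<Sum>b\<in>UNIV. Qx (last xs) b * (\<Sum>y\<in>UNIV. q (Suc n) (xs @ [b]) ys y))"
    using assms by (simp add: joint_snoc sum_distrib_left mult.assoc)
  also have "\<dots> = joint p1 Qx q n xs ys"
    using assms by (simp add: policy_H_sum_eq_1 is_dist_def)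
  finally show ?thesis .
qed

lemma sum_joint_take:
  assumes "\<forall>a. is_dist (Qx a)" "policy_H q" "1 \<le> t" "t \<le> n"
  shows "(\<Sum>xs | length xs = n. \<Sum>ys | length ys = n.
            f (take t xs) (take t ys) * joint p1 Qx q n xs ys) =
         (\<Sum>xs | length xs = t. \<Sum>ys | length ys = t. f xs ys * joint p1 Qx q t xs ys)"
  using assms(4)
proof (induction n rule: nat_induct_at_least)
  case base
  show ?case by (intro sum.cong) auto
next
  case (Suc n)
  have "(\<Sum>xs | length xs = Suc n. \<Sum>ys | length ys = Suc n.
          f (take t xs) (take t ys) * joint p1 Qx q (Suc n) xs ys) =
        (\<Sum>xs | length xs = n. \<Sum>b\<in>UNIV. \<Sum>ys | length ys = n. \<Sum>y\<in>UNIV.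
           f (take t (xs @ [b])) (take t (ys @ [y])) * joint p1 Qx q (Suc n) (xs @ [b]) (ys @ [y]))"
    by (simp only: sum_lists_length_Suc)
  also have "\<dots> = (\<Sum>xs | length xs = n. \<Sum>ys | length ys = n.
           f (take t xs) (take t ys) *
           (\<Sum>b\<in>UNIV. \<Sum>y\<in>UNIV. joint p1 Qx q (Suc n) (xs @ [b]) (ys @ [y])))"
    using Suc.hyps by (subst sum.swap) (intro sum.cong refl; simp add: sum_distrib_left)
  also have "\<dots> = (\<Sum>xs | length xs = n. \<Sum>ys | length ys = n.
           f (take t xs) (take t ys) * joint p1 Qx q n xs ys)"
    using assms Suc.hyps by (intro sum.cong refl) (simp add: sum_joint_snoc)
  finally show ?case using Suc.IH by simp
qed

definition window_sum :: "('w::finite \<Rightarrow> real) \<Rightarrow> ('w \<Rightarrow> 'w \<Rightarrow> real) \<Rightarrow> 'w policy \<Rightarrow> nat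
    \<Rightarrow> ('w list \<Rightarrow> real) \<Rightarrow> 'w list \<Rightarrow> real" where
  "window_sum p1 Qx q t F ys = (\<Sum>xs | length xs = t. F (drop (t - 2) xs) * joint p1 Qx q t xs ys)"

lemma prob_ev_window:
  assumes "\<forall>a. is_dist (Qx a)" "policy_H q" "1 \<le> t" "t \<le> n"
  shows "prob_ev p1 Qx q n (\<lambda>xs ys. R (drop (t - 2) (take t xs)) (take t ys)) =
         (\<Sum>ys | length ys = t. window_sum p1 Qx q t (\<lambda>u. if R u ys then 1 else 0) ys)"
proof -
  let ?f = "\<lambda>xs ys. if R (drop (t - 2) xs) ys then 1 else 0"
  have "prob_ev p1 Qx q n (\<lambda>xs ys. R (drop (t - 2) (take t xs)) (take t ys)) =
        (\<Sum>xs | length xs = n. \<Sum>ys | length ys = n.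
           ?f (take t xs) (take t ys) * joint p1 Qx q n xs ys)"
    unfolding prob_ev_def by (intro sum.cong) auto
  also have "\<dots> = (\<Sum>xs | length xs = t. \<Sum>ys | length ys = t. ?f xs ys * joint p1 Qx q t xs ys)"
    using assms by (rule sum_joint_take)
  also have "\<dots> = (\<Sum>ys | length ys = t. \<Sum>xs | length xs = t. ?f xs ys * joint p1 Qx q t xs ys)"
    by (rule sum.swap)
  finally show ?thesis
    unfolding window_sum_def .
qed

lemma window_sum_Suc:
  assumes "length ys = t" "t \<ge> 1"
  shows "window_sum p1 Qx q (Suc t) F (ys @ [y]) =
         (\<Sum>b\<in>UNIV. \<Sum>xs | length xs = t.
            F [last xs, b] * Qx (last xs) b * q (Suc t) (xs @ [b]) ys y * joint p1 Qx q t xs ys)"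
  unfolding window_sum_def sum_lists_length_Suc
  using assms
  by (subst sum.swap) (intro sum.cong refl, subst drop_last_two; simp add: joint_snoc mult_ac)

definition state_mass :: "('w::finite \<Rightarrow> real) \<Rightarrow> ('w \<Rightarrow> 'w \<Rightarrow> real) \<Rightarrow> 'w policy \<Rightarrow> nat
    \<Rightarrow> 'w \<Rightarrow> 'w list \<Rightarrow> real" where
  "state_mass p1 Qx q t a ys = (\<Sum>xs | length xs = t \<and> last xs = a. joint p1 Qx q t xs ys)"

definition release_mass :: "('w::finite \<Rightarrow> real) \<Rightarrow> ('w \<Rightarrow> 'w \<Rightarrow> real) \<Rightarrow> 'w policy \<Rightarrow> nat
    \<Rightarrow> 'w \<Rightarrow> 'w \<Rightarrow> 'w list \<Rightarrow> 'w \<Rightarrow> real" where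
  "release_mass p1 Qx q t a b ys y =
     (\<Sum>xs | length xs = t \<and> last xs = a. joint p1 Qx q t xs ys * q (Suc t) (xs @ [b]) ys y)"

text \<open>reduced_kernel q t a b ys y is the conditional probability
  P^q(Y_{t+1} = y | X_t = a, X_{t+1} = b, Y^t = ys): the transition factor q_x(b | a) cancels from
  the quotient release_mass / state_mass.  Off the support of (X_t, Y^t) any distribution will do.\<close>

definition reduced_kernel :: "('w::finite \<Rightarrow> real) \<Rightarrow> ('w \<Rightarrow> 'w \<Rightarrow> real) \<Rightarrow> 'w policy \<Rightarrow> nat
    \<Rightarrow> 'w \<Rightarrow> 'w \<Rightarrow> 'w list \<Rightarrow> 'w \<Rightarrow> real" where
  "reduced_kernel p1 Qx q t a b ys y =
     (if state_mass p1 Qx q t a ys = 0 then 1 / real (card (UNIV :: 'w set))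
      else release_mass p1 Qx q t a b ys y / state_mass p1 Qx q t a ys)"

definition reduced_policy :: "('w::finite \<Rightarrow> real) \<Rightarrow> ('w \<Rightarrow> 'w \<Rightarrow> real) \<Rightarrow> 'w policy \<Rightarrow> 'w policy" where
  "reduced_policy p1 Qx q t xs ys y =
     (if t \<le> 1 then q t xs ys y
      else reduced_kernel p1 Qx q (t - 1) (xs ! (t - 2)) (xs ! (t - 1)) ys y)"

lemma reduced_policy_Suc:
  assumes "length xs = t" "t \<ge> 1"
  shows "reduced_policy p1 Qx q (Suc t) (xs @ [b]) ys y =
         reduced_kernel p1 Qx q t (last xs) b ys y"
proof -
  have "(xs @ [b]) ! (t - 1) = last xs"
    using assms by (cases xs rule: rev_cases) (auto simp: nth_append)
  then show ?thesis
    using assms by (simp add: reduced_policy_def nth_append numeral_2_eq_2)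
qed

lemma window_sum_reduced_policy_Suc:
  assumes "length ys = t" "t \<ge> 1"
  shows "window_sum p1 Qx (reduced_policy p1 Qx q) (Suc t) F (ys @ [y]) =
         (\<Sum>b\<in>UNIV. window_sum p1 Qx (reduced_policy p1 Qx q) t
            (\<lambda>u. F [last u, b] * Qx (last u) b * reduced_kernel p1 Qx q t (last u) b ys y) ys)"
  unfolding window_sum_Suc[OF assms] unfolding window_sum_def
  using assms by (intro sum.cong refl) (simp add: reduced_policy_Suc mult_ac)

context
  fixes p1 :: "'w::finite \<Rightarrow> real" and Qx :: "'w \<Rightarrow> 'w \<Rightarrow> real" and qh :: "'w policy"
  assumes p1: "is_dist p1" and Qx: "\<forall>a. is_dist (Qx a)" and qh: "policy_H qh"
begin

lemma release_mass_nonneg: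
  "t \<ge> 1 \<Longrightarrow> length ys = t \<Longrightarrow> release_mass p1 Qx qh t a b ys y \<ge> 0"
  unfolding release_mass_def
  by (intro sum_nonneg mult_nonneg_nonneg joint_nonneg[OF p1 Qx qh] policy_H_nonneg[OF qh]) auto

lemma sum_release_mass:
  assumes "t \<ge> 1" "length ys = t"
  shows "(\<Sum>y\<in>UNIV. release_mass p1 Qx qh t a b ys y) = state_mass p1 Qx qh t a ys"
  unfolding release_mass_def state_mass_def
  using assms
  by (subst sum.swap) (auto simp: sum_distrib_left[symmetric] policy_H_sum_eq_1[OF qh] intro!: sum.cong)

lemma reduced_kernel_mult_state_mass:
  assumes "t \<ge> 1" "length ys = t"
  shows "reduced_kernel p1 Qx qh t a b ys y * state_mass p1 Qx qh t a ys =
         release_mass p1 Qx qh t a b ys y"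
proof (cases "state_mass p1 Qx qh t a ys = 0")
  case True
  then have "\<forall>y\<in>UNIV. release_mass p1 Qx qh t a b ys y = 0"
    using sum_nonneg_eq_0_iff[of UNIV "release_mass p1 Qx qh t a b ys"]
      sum_release_mass[OF assms] release_mass_nonneg[OF assms] by simp
  then show ?thesis using True by simp
next
  case False
  then show ?thesis by (simp add: reduced_kernel_def)
qed

lemma is_dist_reduced_kernel:
  assumes "t \<ge> 1" "length ys = t"
  shows "is_dist (reduced_kernel p1 Qx qh t a b ys)"
proof (cases "state_mass p1 Qx qh t a ys = 0")
  case True
  then show ?thesis by (simp add: is_dist_def reduced_kernel_def)
next
  case False
  moreover have "state_mass p1 Qx qh t a ys \<ge> 0"
    using sum_release_mass[OF assms] release_mass_nonneg[OF assms] by (metis sum_nonneg)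
  ultimately show ?thesis
    using sum_release_mass[OF assms] release_mass_nonneg[OF assms]
    by (simp add: is_dist_def reduced_kernel_def sum_divide_distrib[symmetric])
qed

lemma policy_S_reduced_policy: "policy_S (reduced_policy p1 Qx qh)"
  unfolding policy_S_def policy_H_def
proof (intro conjI allI impI)
  fix t :: nat and xs ys :: "'w list"
  assume "t \<ge> 1" "length xs = t \<and> length ys = t - 1"
  then show "is_dist (reduced_policy p1 Qx qh t xs ys)"
    using qh is_dist_reduced_kernel[of "t - 1" ys] unfolding policy_H_def
    by (cases "t \<le> 1") (simp_all add: reduced_policy_def[abs_def])
next
  fix t :: nat and xs xs' ys :: "'w list"
  assume "t \<ge> 1"
    and window: "length xs = t \<and> length xs' = t \<and> length ys = t - 1 \<and>
      drop (t - 2) xs = drop (t - 2) xs'"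
  show "reduced_policy p1 Qx qh t xs ys = reduced_policy p1 Qx qh t xs' ys"
  proof (cases "t \<le> 1")
    case True
    then show ?thesis using \<open>t \<ge> 1\<close> window by (simp add: reduced_policy_def)
  next
    case False
    have "xs ! i = xs' ! i" if "t - 2 \<le> i" for i
      using nth_drop[of "t - 2" xs "i - (t - 2)"] nth_drop[of "t - 2" xs' "i - (t - 2)"]
        window that
      by simp
    then show ?thesis
      using False by (simp add: reduced_policy_def[abs_def])
  qed
qed

lemma window_sum_Suc_reduced_kernel:
  assumes "length ys = t" "t \<ge> 1"
  shows "window_sum p1 Qx qh (Suc t) F (ys @ [y]) =
         (\<Sum>b\<in>UNIV. window_sum p1 Qx qh t
            (\<lambda>u. F [last u, b] * Qx (last u) b * reduced_kernel p1 Qx qh t (last u) b ys y) ys)"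
proof -
  have "(\<Sum>xs | length xs = t.
          F [last xs, b] * Qx (last xs) b * qh (Suc t) (xs @ [b]) ys y * joint p1 Qx qh t xs ys) =
        (\<Sum>a\<in>UNIV. F [a, b] * Qx a b * release_mass p1 Qx qh t a b ys y)" for b
    using sum_mult_group[where S = "{xs. length xs = t}" and g = last
        and \<phi> = "\<lambda>a. F [a, b] * Qx a b"
        and \<psi> = "\<lambda>xs. joint p1 Qx qh t xs ys * qh (Suc t) (xs @ [b]) ys y"]
    by (simp add: release_mass_def mult_ac)
  moreover have "window_sum p1 Qx qh t
      (\<lambda>u. F [last u, b] * Qx (last u) b * reduced_kernel p1 Qx qh t (last u) b ys y) ys =
      (\<Sum>a\<in>UNIV.
         F [a, b] * Qx a b * reduced_kernel p1 Qx qh t a b ys y * state_mass p1 Qx qh t a ys)" for b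
    using sum_mult_group[where S = "{xs. length xs = t}" and g = last
        and \<phi> = "\<lambda>a. F [a, b] * Qx a b * reduced_kernel p1 Qx qh t a b ys y"
        and \<psi> = "\<lambda>xs. joint p1 Qx qh t xs ys"] assms
    by (simp add: window_sum_def state_mass_def)
  ultimately show ?thesis
    unfolding window_sum_Suc[OF assms]
    using reduced_kernel_mult_state_mass[OF assms(2,1)] by (simp add: mult.assoc)
qed

lemma window_sum_reduced_policy:
  assumes "t \<ge> 1" "length ys = t"
  shows "window_sum p1 Qx (reduced_policy p1 Qx qh) t F ys = window_sum p1 Qx qh t F ys"
  using assms
proof (induction t arbitrary: F ys rule: nat_induct_at_least)
  case base
  then show ?case by (simp add: window_sum_def joint_def reduced_policy_def)
next
  case (Suc t)
  then obtain ys' y where "ys = ys' @ [y]" "length ys' = t"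
    by (cases ys rule: rev_cases) auto
  then show ?case
    using Suc by (simp add: window_sum_reduced_policy_Suc window_sum_Suc_reduced_kernel)
qed

lemma prob_ev_window_reduced_policy:
  assumes "1 \<le> t" "t \<le> n"
  shows "prob_ev p1 Qx (reduced_policy p1 Qx qh) n
           (\<lambda>xs ys. R (drop (t - 2) (take t xs)) (take t ys)) =
         prob_ev p1 Qx qh n (\<lambda>xs ys. R (drop (t - 2) (take t xs)) (take t ys))"
  using policy_S_reduced_policy assms
  by (simp add: prob_ev_window[OF Qx] policy_S_def qh window_sum_reduced_policy)

lemma cmi_reduced_policy:
  assumes "1 \<le> t" "t \<le> n"
  shows "cmi p1 Qx (reduced_policy p1 Qx qh) n t = cmi p1 Qx qh n t"
proof -
  note window_event = prob_ev_window_reduced_policy[OF assms]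
  from window_event[of "\<lambda>u c. u = _ \<and> c ! (t - 1) = _ \<and> take (t - 1) c = _"]
    window_event[of "\<lambda>u c. u = _ \<and> take (t - 1) c = _"]
    window_event[of "\<lambda>u c. c ! (t - 1) = _ \<and> take (t - 1) c = _"]
    window_event[of "\<lambda>u c. take (t - 1) c = _"]
  show ?thesis
    using assms by (simp add: cmi_def Let_def cong: if_cong)
qed

end

theorem lemma2:
  fixes p1 :: "'w::finite \<Rightarrow> real" and Qx :: "'w \<Rightarrow> 'w \<Rightarrow> real" and qh :: "'w policy"
  assumes "is_dist p1"
    and "\<forall>a. is_dist (Qx a)"
    and "policy_H qh"
  shows "\<exists>qs. policy_S qs \<and>
           (\<forall>n\<ge>1. (\<Sum>t=1..n. cmi p1 Qx qh n t) = (\<Sum>t=1..n. cmi p1 Qx qs n t))"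
  using policy_S_reduced_policy[OF assms] cmi_reduced_policy[OF assms]
  by (intro exI[of _ "reduced_policy p1 Qx qh"]) auto

end
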